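(* A point $(s,p)\in\mathbb{C}^2$ belongs to $\mathbb{G}=\{(z_1+z_2,z_1z_2):z_1,z_2\in\mathbb{D}\}$ if and only if both $1>|p|^2+\mathrm{Im}(\overline{s}p+\overline{s})$ and $2+2|p|^2>|s|^2+|s^2-4p|$.
   Context: $\mathbb{D}$ is the open unit disc in $\mathbb{C}$. *)

theory Defs
  imports "HOL-Analysis.Analysis"
begin

definition unit_disc :: "complex set" where
  "unit_disc = ball 0 1"

definition symmetrized_bidisc :: "(complex \<times> complex) set" where
  "symmetrized_bidisc = {(z1 + z2, z1 * z2) | z1 z2. z1 \<in> unit_disc \<and> z2 \<in> unit_disc}"

end

theory Submission
  imports Defs
begin

text \<open>Write \<open>s = z\<^sub>1 + z\<^sub>2\<close>, \<open>p = z\<^sub>1 z\<^sub>2\<close> with \<open>z\<^sub>1, z\<^sub>2\<close> the roots of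
  \<open>X\<^sup>2 - s X + p\<close> and put \<open>a = |z\<^sub>1|\<close>, \<open>b = |z\<^sub>2|\<close>. By the parallelogram law
  \<open>|s|\<^sup>2 + |s\<^sup>2 - 4p| = |z\<^sub>1 + z\<^sub>2|\<^sup>2 + |z\<^sub>1 - z\<^sub>2|\<^sup>2 = 2a\<^sup>2 + 2b\<^sup>2\<close>, so the second inequality
  says \<open>(1 - a\<^sup>2)(1 - b\<^sup>2) > 0\<close>: either both roots lie in the disc or both lie outside
  its closure. The first inequality reads \<open>a\<^sup>2b\<^sup>2 + t < 1\<close>, where
  \<open>t = Im (s\<^sup>* p + s\<^sup>*) = -((1 - b\<^sup>2) Im z\<^sub>1 + (1 - a\<^sup>2) Im z\<^sub>2)\<close>, so
  \<open>|t| \<le> a|1 - b\<^sup>2| + b|1 - a\<^sup>2|\<close>; the identity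
  \<open>1 - a\<^sup>2b\<^sup>2 - a(1 - b\<^sup>2) - b(1 - a\<^sup>2) = (1 - a)(1 - b)(1 - ab)\<close> shows that it holds in the
  first case and fails in the second.\<close>

lemma sum_prod_eq_cases:
  fixes u v z1 z2 :: "'a :: idom"
  assumes "u + v = z1 + z2" "u * v = z1 * z2"
  shows "(u = z1 \<and> v = z2) \<or> (u = z2 \<and> v = z1)"
proof -
  have "(u - z1) * (u - z2) = u * (u + v - (z1 + z2)) - (u * v - z1 * z2)"
    by (simp add: algebra_simps)
  then have "(u - z1) * (u - z2) = 0" using assms by simp
  then show ?thesis using assms(1) by auto
qed

lemma Im_cnj_sum_mult_prod:
  fixes z1 z2 :: complex
  shows "Im (cnj (z1 + z2) * (z1 * z2) + cnj (z1 + z2)) =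
    - ((1 - (cmod z2)\<^sup>2) * Im z1 + (1 - (cmod z1)\<^sup>2) * Im z2)"
  unfolding cmod_power2 by (simp add: power2_eq_square algebra_simps)

lemma abs_Im_cnj_sum_mult_prod_le:
  fixes z1 z2 :: complex
  shows "\<bar>Im (cnj (z1 + z2) * (z1 * z2) + cnj (z1 + z2))\<bar> \<le>
    cmod z1 * \<bar>1 - (cmod z2)\<^sup>2\<bar> + cmod z2 * \<bar>1 - (cmod z1)\<^sup>2\<bar>"
proof -
  have "\<bar>(1 - (cmod z2)\<^sup>2) * Im z1\<bar> \<le> \<bar>1 - (cmod z2)\<^sup>2\<bar> * cmod z1"
    unfolding abs_mult by (intro mult_left_mono abs_Im_le_cmod) simp
  moreover have "\<bar>(1 - (cmod z1)\<^sup>2) * Im z2\<bar> \<le> \<bar>1 - (cmod z1)\<^sup>2\<bar> * cmod z2"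
    unfolding abs_mult by (intro mult_left_mono abs_Im_le_cmod) simp
  ultimately show ?thesis
    unfolding Im_cnj_sum_mult_prod by (simp add: algebra_simps)
qed

lemma norm_sum_sq_plus_norm_discrim:
  fixes z1 z2 :: complex
  shows "(cmod (z1 + z2))\<^sup>2 + cmod ((z1 + z2)\<^sup>2 - 4 * (z1 * z2)) =
    2 * (cmod z1)\<^sup>2 + 2 * (cmod z2)\<^sup>2"
proof -
  have "(z1 + z2)\<^sup>2 - 4 * (z1 * z2) = (z1 - z2)\<^sup>2"
    by (simp add: power2_eq_square algebra_simps)
  then have "cmod ((z1 + z2)\<^sup>2 - 4 * (z1 * z2)) = (cmod (z1 - z2))\<^sup>2"
    by (simp add: norm_power)
  moreover have "(cmod (z1 + z2))\<^sup>2 + (cmod (z1 - z2))\<^sup>2 = 2 * (cmod z1)\<^sup>2 + 2 * (cmod z2)\<^sup>2"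
    unfolding cmod_power2 by (simp add: power2_eq_square algebra_simps)
  ultimately show ?thesis by simp
qed

lemma both_less_one_iff:
  fixes a b t :: real
  assumes "a \<ge> 0" "b \<ge> 0" and t: "\<bar>t\<bar> \<le> a * \<bar>1 - b\<^sup>2\<bar> + b * \<bar>1 - a\<^sup>2\<bar>"
  shows "a < 1 \<and> b < 1 \<longleftrightarrow> a\<^sup>2 * b\<^sup>2 + t < 1 \<and> (1 - a\<^sup>2) * (1 - b\<^sup>2) > 0"
proof -
  have factor:
    "1 - a\<^sup>2 * b\<^sup>2 - a * (1 - b\<^sup>2) - b * (1 - a\<^sup>2) = (1 - a) * (1 - b) * (1 - a * b)"
    by (simp add: power2_eq_square algebra_simps)
  show ?thesis
  proof
    assume "a < 1 \<and> b < 1"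
    then have "a * b < 1" "a\<^sup>2 < 1" "b\<^sup>2 < 1"
      using assms(1,2) mult_strict_mono'[of a 1 b 1] by (auto simp: power_less_one_iff)
    moreover have "(1 - a) * (1 - b) * (1 - a * b) > 0"
      using \<open>a < 1 \<and> b < 1\<close> \<open>a * b < 1\<close> by simp
    ultimately show "a\<^sup>2 * b\<^sup>2 + t < 1 \<and> (1 - a\<^sup>2) * (1 - b\<^sup>2) > 0"
      using factor t by auto
  next
    assume lhs: "a\<^sup>2 * b\<^sup>2 + t < 1 \<and> (1 - a\<^sup>2) * (1 - b\<^sup>2) > 0"
    then consider "a\<^sup>2 < 1" "b\<^sup>2 < 1" | "a\<^sup>2 > 1" "b\<^sup>2 > 1"
      by (metis linorder_neqE_linordered_idom mult_nonneg_nonpos mult_nonpos_nonneg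
          diff_ge_0_iff_ge diff_le_0_iff_le not_le less_le)
    then show "a < 1 \<and> b < 1"
    proof cases
      case 1
      then show ?thesis using assms(1,2) by (simp add: power_less_one_iff)
    next
      case 2
      then have "a > 1" "b > 1"
        using assms(1,2) power2_less_imp_less[of 1 a] power2_less_imp_less[of 1 b] by simp_all
      moreover have "a * b > 1"
        using \<open>a > 1\<close> \<open>b > 1\<close> by (rule less_1_mult)
      ultimately have "(1 - a) * (1 - b) * (1 - a * b) < 0"
        by (intro mult_pos_neg mult_neg_neg) simp_all
      moreover have "a * \<bar>1 - b\<^sup>2\<bar> + b * \<bar>1 - a\<^sup>2\<bar> = - (a * (1 - b\<^sup>2) + b * (1 - a\<^sup>2))"
        using 2 by (simp add: algebra_simps)
      ultimately have False
        using factor t lhs by linarith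
      then show ?thesis ..
    qed
  qed
qed

lemma ex_sum_prod_eq:
  fixes s p :: complex
  obtains z1 z2 where "s = z1 + z2" "p = z1 * z2"
proof
  define w where "w = csqrt (s\<^sup>2 - 4 * p)"
  show "s = (s + w) / 2 + (s - w) / 2"
    by (simp add: field_simps)
  have "(s + w) / 2 * ((s - w) / 2) = (s\<^sup>2 - w\<^sup>2) / 4"
    by (simp add: power2_eq_square field_simps)
  then show "p = (s + w) / 2 * ((s - w) / 2)"
    by (simp add: w_def)
qed

lemma symmetrized_bidisc_iff:
  assumes "s = z1 + z2" "p = z1 * z2"
  shows "(s, p) \<in> symmetrized_bidisc \<longleftrightarrow> cmod z1 < 1 \<and> cmod z2 < 1"
proof
  assume "(s, p) \<in> symmetrized_bidisc"
  then obtain u v where "s = u + v" "p = u * v" "cmod u < 1" "cmod v < 1"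
    by (auto simp: symmetrized_bidisc_def unit_disc_def)
  with assms show "cmod z1 < 1 \<and> cmod z2 < 1"
    using sum_prod_eq_cases[of u v z1 z2] by auto
next
  assume "cmod z1 < 1 \<and> cmod z2 < 1"
  with assms show "(s, p) \<in> symmetrized_bidisc"
    by (auto simp: symmetrized_bidisc_def unit_disc_def)
qed

theorem corollary3p4:
  fixes s p :: complex
  shows "(s, p) \<in> symmetrized_bidisc \<longleftrightarrow>
     (1 > (cmod p)\<^sup>2 + Im (cnj s * p + cnj s) \<and>
      2 + 2 * (cmod p)\<^sup>2 > (cmod s)\<^sup>2 + cmod (s\<^sup>2 - 4 * p))"
proof -
  obtain z1 z2 where sp: "s = z1 + z2" "p = z1 * z2"
    by (rule ex_sum_prod_eq)
  have norm_p: "(cmod p)\<^sup>2 = (cmod z1)\<^sup>2 * (cmod z2)\<^sup>2"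
    by (simp add: sp norm_mult power_mult_distrib)
  have "(cmod s)\<^sup>2 + cmod (s\<^sup>2 - 4 * p) = 2 * (cmod z1)\<^sup>2 + 2 * (cmod z2)\<^sup>2"
    unfolding sp by (rule norm_sum_sq_plus_norm_discrim)
  moreover have "(1 - (cmod z1)\<^sup>2) * (1 - (cmod z2)\<^sup>2) =
      1 + (cmod z1)\<^sup>2 * (cmod z2)\<^sup>2 - (cmod z1)\<^sup>2 - (cmod z2)\<^sup>2"
    by (simp add: algebra_simps)
  ultimately have discriminant_iff:
    "2 + 2 * (cmod p)\<^sup>2 > (cmod s)\<^sup>2 + cmod (s\<^sup>2 - 4 * p) \<longleftrightarrow>
      (1 - (cmod z1)\<^sup>2) * (1 - (cmod z2)\<^sup>2) > 0"
    unfolding norm_p by linarith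
  have "\<bar>Im (cnj s * p + cnj s)\<bar> \<le>
      cmod z1 * \<bar>1 - (cmod z2)\<^sup>2\<bar> + cmod z2 * \<bar>1 - (cmod z1)\<^sup>2\<bar>"
    unfolding sp by (rule abs_Im_cnj_sum_mult_prod_le)
  then have "cmod z1 < 1 \<and> cmod z2 < 1 \<longleftrightarrow>
      (cmod p)\<^sup>2 + Im (cnj s * p + cnj s) < 1 \<and> (1 - (cmod z1)\<^sup>2) * (1 - (cmod z2)\<^sup>2) > 0"
    unfolding norm_p by (intro both_less_one_iff) simp_all
  then show ?thesis
    unfolding symmetrized_bidisc_iff[OF sp] discriminant_iff .
qed

end
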